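(* For every $m\ge1$ and every probability mass function $(g_k)_{k\in\mathbb Z}$ of a sum of $m$ independent Bernoulli random variables (extended by $0$ outside $\{0,\ldots,m\}$), $$g_{k-1}g_k^2-2g_{k-1}^2g_{k+1}+g_kg_{k+1}g_{k-2}\ge0\quad\text{for all }k\in\mathbb Z.$$ *)

theory Defs
  imports "HOL-Probability.Probability"
begin

text \<open>Distribution of the sum of independent Bernoulli random variables with
success probabilities ps (as an int-valued pmf, so its pmf is 0 outside 0..length ps).\<close>
definition bernoulli_sum_pmf :: "real list \<Rightarrow> int pmf" where
  "bernoulli_sum_pmf ps =
     foldr (\<lambda>p D. map_pmf (\<lambda>(b, s). (if b then 1 else 0) + s) (pair_pmf (bernoulli_pmf p) D))
           ps (return_pmf 0)"

end

theory Submission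
  imports Defs
begin

text \<open>Adding one Bernoulli(p) summand turns the pmf g into the mixture
  (1 - p) g(k) + p g(k - 1). Induct on the number of summands with the stronger invariant:
  g is nonnegative, has no internal zeros, is log-concave, and satisfies the cubic inequality.
  For the mixture q g(k) + p g(k - 1) the cubic form is a cubic polynomial in (q, p): its
  extreme coefficients are the old cubic forms at k and k - 1, and its two middle coefficients
  are nonnegative by explicit identities expressing them (after multiplication by a positive
  factor) as nonnegative combinations of the old cubic forms and log-concavity defects.\<close>

definition shift_mix :: "real \<Rightarrow> real \<Rightarrow> (int \<Rightarrow> real) \<Rightarrow> int \<Rightarrow> real" where
  "shift_mix q p g k = q * g k + p * g (k - 1)"

definition cubic_form :: "real \<Rightarrow> real \<Rightarrow> real \<Rightarrow> real \<Rightarrow> real" where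
  "cubic_form a b c d = b * c^2 - 2 * b^2 * d + a * c * d"

definition nonneg_seq :: "(int \<Rightarrow> real) \<Rightarrow> bool" where
  "nonneg_seq g \<longleftrightarrow> (\<forall>k. 0 \<le> g k)"

definition contiguous_support :: "(int \<Rightarrow> real) \<Rightarrow> bool" where
  "contiguous_support g \<longleftrightarrow> (\<forall>i k j. i \<le> k \<longrightarrow> k \<le> j \<longrightarrow> 0 < g i \<longrightarrow> 0 < g j \<longrightarrow> 0 < g k)"

definition log_concave_seq :: "(int \<Rightarrow> real) \<Rightarrow> bool" where
  "log_concave_seq g \<longleftrightarrow> (\<forall>k. g (k - 1) * g (k + 1) \<le> (g k)^2)"

definition cubic_nonneg_seq :: "(int \<Rightarrow> real) \<Rightarrow> bool" where
  "cubic_nonneg_seq g \<longleftrightarrow> (\<forall>k. 0 \<le> cubic_form (g (k - 2)) (g (k - 1)) (g k) (g (k + 1)))"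

lemma pmf_bernoulli_sum_Nil: "pmf (bernoulli_sum_pmf []) k = (if k = 0 then 1 else 0)"
  by (simp add: bernoulli_sum_pmf_def pmf_return)

lemma pmf_bernoulli_sum_Cons:
  assumes "0 \<le> p" "p \<le> 1"
  shows "pmf (bernoulli_sum_pmf (p # ps)) = shift_mix (1 - p) p (pmf (bernoulli_sum_pmf ps))"
proof
  fix k
  define D where "D = bernoulli_sum_pmf ps"
  have bind: "bernoulli_sum_pmf (p # ps) =
      bind_pmf (bernoulli_pmf p) (\<lambda>b. map_pmf (\<lambda>s. (if b then 1 else 0) + s) D)"
    by (simp add: bernoulli_sum_pmf_def D_def pair_pmf_def map_bind_pmf map_pmf_def
        bind_assoc_pmf bind_return_pmf)
  have "(+) (0::int) = id"
    by auto
  then have no_shift: "pmf (map_pmf ((+) 0) D) k = pmf D k"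
    by simp
  have shift: "pmf (map_pmf ((+) 1) D) k = pmf D (k - 1)"
    using pmf_map_inj'[of "(+) (1::int)" D "k - 1"] by (simp add: inj_def)
  have "pmf (bernoulli_sum_pmf (p # ps)) k
      = pmf (map_pmf ((+) 1) D) k * p + pmf (map_pmf ((+) 0) D) k * (1 - p)"
    unfolding bind pmf_bind using assms by (simp add: if_distrib cong: if_cong)
  then show "pmf (bernoulli_sum_pmf (p # ps)) k = shift_mix (1 - p) p (pmf D) k"
    using shift no_shift by (simp add: shift_mix_def D_def algebra_simps)
qed

lemma cross_product_le:
  fixes a b c d :: real
  assumes "0 \<le> a" "0 \<le> b" "0 \<le> c" "0 \<le> d"
    and "a * c \<le> b^2" "b * d \<le> c^2"
    and "b = 0 \<Longrightarrow> c = 0 \<Longrightarrow> a * d = 0"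
  shows "a * d \<le> b * c"
proof (cases "b = 0")
  case False
  have "b * (b * c - a * d) = c * (b^2 - a * c) + a * (c^2 - b * d)"
    by (simp add: power2_eq_square algebra_simps)
  then have "0 \<le> b * (b * c - a * d)"
    using assms by simp
  then show ?thesis
    using False assms by (simp add: zero_le_mult_iff)
next
  case b0: True
  show ?thesis
  proof (cases "c = 0")
    case True
    then show ?thesis using b0 assms by auto
  next
    case False
    have "c * (b * c - a * d) = b * (c^2 - b * d) + d * (b^2 - a * c)"
      by (simp add: power2_eq_square algebra_simps)
    then have "0 \<le> c * (b * c - a * d)"
      using assms by simp
    then show ?thesis
      using False assms by (simp add: zero_le_mult_iff)
  qed
qed

lemma cubic_form_shift_mix:
  fixes q p u a b c d :: real
  shows "cubic_form (q * a + p * u) (q * b + p * a) (q * c + p * b) (q * d + p * c)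
    = q^3 * cubic_form a b c d
      + q^2 * p * (2 * a * c^2 - 3 * a * b * d + u * c * d)
      + q * p^2 * (b^3 - a * b * c - 2 * a^2 * d + u * c^2 + u * b * d)
      + p^3 * cubic_form u a b c"
  unfolding cubic_form_def by (simp add: power2_eq_square power3_eq_cube algebra_simps)

lemma cubic_mix_coeff1_nonneg:
  fixes u a b c d :: real
  assumes "0 \<le> u" "0 \<le> a" "0 \<le> b" "0 \<le> c" "0 \<le> d"
    and "0 \<le> cubic_form a b c d" "0 \<le> cubic_form u a b c"
  shows "0 \<le> 2 * a * c^2 - 3 * a * b * d + u * c * d"
proof (cases "b = 0")
  case True
  then show ?thesis using assms by simp
next
  case False
  have "b * (2 * a * c^2 - 3 * a * b * d + u * c * d)
      = 2 * a * cubic_form a b c d + d * cubic_form u a b c"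
    unfolding cubic_form_def by (simp add: power2_eq_square algebra_simps)
  then have "0 \<le> b * (2 * a * c^2 - 3 * a * b * d + u * c * d)"
    using assms by simp
  then show ?thesis
    using False assms by (simp add: zero_le_mult_iff)
qed

lemma cubic_mix_coeff2_nonneg:
  fixes u a b c d :: real
  assumes nonneg: "0 \<le> u" "0 \<le> a" "0 \<le> b" "0 \<le> c" "0 \<le> d"
    and lc: "a * c \<le> b^2" "b * d \<le> c^2"
    and cubic: "0 \<le> cubic_form a b c d" "0 \<le> cubic_form u a b c"
    and gap_b: "b = 0 \<Longrightarrow> a * d = 0"
    and gap_c: "c = 0 \<Longrightarrow> b * d = 0"
  shows "0 \<le> b^3 - a * b * c - 2 * a^2 * d + u * c^2 + u * b * d"
proof (cases "b = 0 \<or> c = 0")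
  case True
  then show ?thesis using assms by auto
next
  case False
  define l1 l2 f1 f2 where "l1 = b^2 - a * c" and "l2 = c^2 - b * d"
    and "f1 = cubic_form u a b c" and "f2 = cubic_form a b c d"
  have "b^2 * c^2 * (b^3 - a * b * c - 2 * a^2 * d + u * c^2 + u * b * d)
      = d * l1^3 + b * l1^2 * l2 + c * d * l1 * f1 + b * c^3 * f1 + a * c^2 * d * f1 + a^2 * c^2 * f2"
    unfolding l1_def l2_def f1_def f2_def cubic_form_def
    by (simp add: power2_eq_square power3_eq_cube algebra_simps)
  moreover have "0 \<le> l1" "0 \<le> l2" "0 \<le> f1" "0 \<le> f2"
    using lc cubic by (auto simp: l1_def l2_def f1_def f2_def)
  ultimately have "0 \<le> b^2 * c^2 * (b^3 - a * b * c - 2 * a^2 * d + u * c^2 + u * b * d)"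
    using nonneg by simp
  moreover have "0 < b^2 * c^2"
    using False by simp
  ultimately show ?thesis
    by (simp add: zero_le_mult_iff)
qed

lemma nonneg_seq_shift_mix:
  assumes "nonneg_seq g" "0 \<le> q" "0 \<le> p"
  shows "nonneg_seq (shift_mix q p g)"
  using assms by (simp add: nonneg_seq_def shift_mix_def)

lemma shift_mix_pos_iff:
  assumes "nonneg_seq g" "0 < q" "0 < p"
  shows "0 < shift_mix q p g x \<longleftrightarrow> 0 < g x \<or> 0 < g (x - 1)"
proof -
  have nonneg: "0 \<le> g x" "0 \<le> g (x - 1)"
    using assms(1) by (simp_all add: nonneg_seq_def)
  show ?thesis
  proof
    assume "0 < shift_mix q p g x"
    then have "g x \<noteq> 0 \<or> g (x - 1) \<noteq> 0"
      by (auto simp: shift_mix_def)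
    then show "0 < g x \<or> 0 < g (x - 1)"
      using nonneg by linarith
  next
    assume "0 < g x \<or> 0 < g (x - 1)"
    then show "0 < shift_mix q p g x"
      using nonneg assms(2,3) unfolding shift_mix_def
      by (auto intro: add_pos_nonneg add_nonneg_pos)
  qed
qed

lemma contiguous_support_shift_mix:
  assumes g: "nonneg_seq g" "contiguous_support g" and "0 \<le> q" "0 \<le> p"
  shows "contiguous_support (shift_mix q p g)"
  unfolding contiguous_support_def
proof (intro allI impI)
  fix i k j
  assume ik: "i \<le> k" and kj: "k \<le> j"
    and pos: "0 < shift_mix q p g i" "0 < shift_mix q p g j"
  have interval: "0 < g k'" if "i' \<le> k'" "k' \<le> j'" "0 < g i'" "0 < g j'" for i' k' j'
    using g(2) that unfolding contiguous_support_def by blast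
  consider "p = 0" | "q = 0" | "0 < q" "0 < p"
    using assms by linarith
  then show "0 < shift_mix q p g k"
  proof cases
    case 1
    then show ?thesis
      using pos ik kj interval[of i k j] assms(3) by (simp add: shift_mix_def zero_less_mult_iff)
  next
    case 2
    then show ?thesis
      using pos ik kj interval[of "i - 1" "k - 1" "j - 1"] assms(4)
      by (simp add: shift_mix_def zero_less_mult_iff)
  next
    case 3
    note iff = shift_mix_pos_iff[OF g(1) 3]
    obtain i' where i': "i' \<in> {i - 1, i}" "0 < g i'"
      using pos(1) iff[of i] by blast
    obtain j' where j': "j' \<in> {j - 1, j}" "0 < g j'"
      using pos(2) iff[of j] by blast
    show ?thesis
    proof (cases "k \<le> j'")
      case True
      moreover have "i' \<le> k"
        using i'(1) ik by auto
      ultimately have "0 < g k"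
        using interval[of i' k j'] i'(2) j'(2) by simp
      then show ?thesis
        using iff by simp
    next
      case False
      then have "k - 1 = j'" using j' kj by auto
      then show ?thesis using iff j' by simp
    qed
  qed
qed

lemma contiguous_support_gap:
  assumes "nonneg_seq g" "contiguous_support g" "i < k" "k < j" "g k = 0"
  shows "g i * g j = 0"
proof (rule ccontr)
  assume "g i * g j \<noteq> 0"
  then have "0 < g i" "0 < g j"
    using assms(1) by (auto simp: nonneg_seq_def less_le)
  then have "0 < g k"
    using assms(2-4) unfolding contiguous_support_def by (meson less_imp_le)
  with assms(5) show False by simp
qed

lemma log_concave_seq_window:
  assumes "log_concave_seq g"
  shows "g (k - 2) * g k \<le> (g (k - 1))^2" "g (k - 1) * g (k + 1) \<le> (g k)^2"
proof -
  have "g (k - 1 - 1) * g (k - 1 + 1) \<le> (g (k - 1))^2"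
    using assms unfolding log_concave_seq_def by blast
  then show "g (k - 2) * g k \<le> (g (k - 1))^2"
    by simp
  show "g (k - 1) * g (k + 1) \<le> (g k)^2"
    using assms unfolding log_concave_seq_def by blast
qed

lemma log_concave_seq_shift_mix:
  assumes g: "nonneg_seq g" "contiguous_support g" "log_concave_seq g"
    and q: "0 \<le> q" and p: "0 \<le> p"
  shows "log_concave_seq (shift_mix q p g)"
  unfolding log_concave_seq_def
proof
  fix k
  define a b c d where "a = g (k - 2)" and "b = g (k - 1)" and "c = g k" and "d = g (k + 1)"
  have nonneg: "0 \<le> a" "0 \<le> b" "0 \<le> c" "0 \<le> d"
    using g(1) by (simp_all add: nonneg_seq_def a_def b_def c_def d_def)
  have lc: "a * c \<le> b^2" "b * d \<le> c^2"
    using log_concave_seq_window[OF g(3)] by (simp_all add: a_def b_def c_def d_def)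
  have cross: "a * d \<le> b * c"
  proof (rule cross_product_le[OF nonneg lc])
    assume "b = 0"
    then show "a * d = 0"
      using contiguous_support_gap[OF g(1,2), of "k - 2" "k - 1" "k + 1"]
      by (simp add: a_def b_def d_def)
  qed
  moreover have "(shift_mix q p g k)^2 - shift_mix q p g (k - 1) * shift_mix q p g (k + 1)
      = q^2 * (c^2 - b * d) + p * q * (b * c - a * d) + p^2 * (b^2 - a * c)"
    by (simp add: shift_mix_def a_def b_def c_def d_def power2_eq_square algebra_simps)
  moreover have "0 \<le> q^2 * (c^2 - b * d) + p * q * (b * c - a * d) + p^2 * (b^2 - a * c)"
    using cross lc p q by (intro add_nonneg_nonneg mult_nonneg_nonneg) auto
  ultimately show "shift_mix q p g (k - 1) * shift_mix q p g (k + 1) \<le> (shift_mix q p g k)^2"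
    by linarith
qed

lemma cubic_nonneg_seq_shift_mix:
  assumes g: "nonneg_seq g" "contiguous_support g" "log_concave_seq g" "cubic_nonneg_seq g"
    and q: "0 \<le> q" and p: "0 \<le> p"
  shows "cubic_nonneg_seq (shift_mix q p g)"
  unfolding cubic_nonneg_seq_def
proof
  fix k
  define u a b c d where "u = g (k - 3)" and "a = g (k - 2)" and "b = g (k - 1)"
    and "c = g k" and "d = g (k + 1)"
  have nonneg: "0 \<le> u" "0 \<le> a" "0 \<le> b" "0 \<le> c" "0 \<le> d"
    using g(1) by (simp_all add: nonneg_seq_def u_def a_def b_def c_def d_def)
  have lc: "a * c \<le> b^2" "b * d \<le> c^2"
    using log_concave_seq_window[OF g(3)] by (simp_all add: a_def b_def c_def d_def)
  have "0 \<le> cubic_form (g (k - 2)) (g (k - 1)) (g k) (g (k + 1))"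
    "0 \<le> cubic_form (g (k - 1 - 2)) (g (k - 1 - 1)) (g (k - 1)) (g (k - 1 + 1))"
    using g(4) unfolding cubic_nonneg_seq_def by blast+
  then have cubic: "0 \<le> cubic_form a b c d" "0 \<le> cubic_form u a b c"
    by (simp_all add: u_def a_def b_def c_def d_def)
  have gap_b: "a * d = 0" if "b = 0"
    using that contiguous_support_gap[OF g(1,2), of "k - 2" "k - 1" "k + 1"]
    by (simp add: a_def b_def d_def)
  have gap_c: "b * d = 0" if "c = 0"
    using that contiguous_support_gap[OF g(1,2), of "k - 1" k "k + 1"]
    by (simp add: b_def c_def d_def)
  have "cubic_form (shift_mix q p g (k - 2)) (shift_mix q p g (k - 1))
      (shift_mix q p g k) (shift_mix q p g (k + 1))
    = cubic_form (q * a + p * u) (q * b + p * a) (q * c + p * b) (q * d + p * c)"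
    by (simp add: shift_mix_def u_def a_def b_def c_def d_def algebra_simps)
  also have "\<dots> \<ge> 0"
    unfolding cubic_form_shift_mix
    using q p
    by (intro add_nonneg_nonneg mult_nonneg_nonneg[OF _ cubic(1)] mult_nonneg_nonneg[OF _ cubic(2)]
        mult_nonneg_nonneg[OF _ cubic_mix_coeff1_nonneg[OF nonneg cubic]]
        mult_nonneg_nonneg[OF _ cubic_mix_coeff2_nonneg[OF nonneg lc cubic gap_b gap_c]])
      simp_all
  finally show "0 \<le> cubic_form (shift_mix q p g (k - 2)) (shift_mix q p g (k - 1))
      (shift_mix q p g k) (shift_mix q p g (k + 1))" .
qed

lemma bernoulli_sum_pmf_invariant:
  assumes "\<forall>p\<in>set ps. 0 \<le> p \<and> p \<le> 1"
  defines "g \<equiv> pmf (bernoulli_sum_pmf ps)"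
  shows "nonneg_seq g \<and> contiguous_support g \<and> log_concave_seq g \<and> cubic_nonneg_seq g"
  using assms unfolding g_def
proof (induction ps)
  case Nil
  then show ?case
    by (auto simp: pmf_bernoulli_sum_Nil nonneg_seq_def contiguous_support_def
        log_concave_seq_def cubic_nonneg_seq_def cubic_form_def)
next
  case (Cons p ps)
  then have p: "0 \<le> p" "p \<le> 1" by auto
  with Cons show ?case
    by (simp add: pmf_bernoulli_sum_Cons nonneg_seq_shift_mix contiguous_support_shift_mix
        log_concave_seq_shift_mix cubic_nonneg_seq_shift_mix)
qed

theorem theoremA2:
  fixes ps :: "real list" and k :: int
  assumes "length ps \<ge> 1"
    and "\<forall>p\<in>set ps. 0 \<le> p \<and> p \<le> 1"
  shows "pmf (bernoulli_sum_pmf ps) (k - 1) * (pmf (bernoulli_sum_pmf ps) k)^2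
         - 2 * (pmf (bernoulli_sum_pmf ps) (k - 1))^2 * pmf (bernoulli_sum_pmf ps) (k + 1)
         + pmf (bernoulli_sum_pmf ps) k * pmf (bernoulli_sum_pmf ps) (k + 1)
           * pmf (bernoulli_sum_pmf ps) (k - 2) \<ge> 0"
proof -
  let ?g = "pmf (bernoulli_sum_pmf ps)"
  have "cubic_nonneg_seq ?g"
    using bernoulli_sum_pmf_invariant[OF assms(2)] by blast
  then have "0 \<le> cubic_form (?g (k - 2)) (?g (k - 1)) (?g k) (?g (k + 1))"
    unfolding cubic_nonneg_seq_def by blast
  then show ?thesis
    unfolding cubic_form_def by (simp add: algebra_simps)
qed

end
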